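(* Let $\{\varphi_n\},\{\psi_n\}$ be biorthogonal sequences in a Hilbert space $\mathcal H$ forming a $(\mathcal D,\mathcal E)$-quasi basis for dense subspaces $\mathcal D,\mathcal E$ with $D_\psi\subseteq\mathcal D\subseteq D(\varphi)$, $D_\varphi\subseteq\mathcal E\subseteq D(\psi)$. Let $\{f_n\}$ be an ONB such that $T_\varphi:=\overline{T_{f,\varphi}|_{\mathcal D}}$ is positive self-adjoint and $(\{f_n\},T_\varphi)$ is a constructing pair for $\{\varphi_n\}$, and let $\{g_n\}$ be an ONB such that $T_\psi:=\overline{T_{g,\psi}|_{\mathcal E}}$ is positive self-adjoint and $(\{g_n\},T_\psi)$ is a constructing pair for $\{\psi_n\}$. Then: (1) If $H_f^\alpha\mathcal D\subseteq\mathcal D$ (i.e. $\mathcal D\subseteq D(H_f^\alpha)$ and $H_f^\alpha$ maps $\mathcal D$ into $\mathcal D$) for some complex sequence $\alpha=\{\alpha_n\}$, then the linear span of $T_\varphi\mathcal D$ is dense in $\mathcal H$ and the non-self-adjoint Hamiltonian $T_\varphi H_f^\alpha T_\varphi^{-1}$ belongs to $\mathcal L(T_\varphi\mathcal D)$ (i.e. $T_\varphi\mathcal D$ is contained in its domain and is mapped into itself by it). (2) If $H_g^\alpha\mathcal E\subseteq\mathcal E$ for some complex sequence $\alpha=\{\alpha_n\}$, then the linear span of $T_\psi\mathcal E$ is dense in $\mathcal H$ and the non-self-adjoint Hamiltonian $T_\psi H_g^\alpha T_\psi^{-1}$ belongs to $\mathcal L(T_\psi\mathcal E)$.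
   Context: Inner product linear in the first argument. Biorthogonal: $\langle\varphi_n,\psi_m\rangle=\delta_{nm}$. $D_\varphi,D_\psi$ are the linear spans; $D(\varphi)=\{x:\sum_n|\langle x,\varphi_n\rangle|^2<\infty\}$, similarly $D(\psi)$. The pair is a $(\mathcal D,\mathcal E)$-quasi basis if $\sum_k\langle x,\varphi_k\rangle\langle\psi_k,y\rangle=\langle x,y\rangle$ for all $x\in\mathcal D$, $y\in\mathcal E$. For an ONB $\{f_n\}$, $T_{f,\varphi}$ is the operator with domain $D(\varphi)$, $T_{f,\varphi}x=\sum_n\langle x,\varphi_n\rangle f_n$ (similarly $T_{g,\psi}$ on $D(\psi)$); bar is closure, $|$ is restriction. A constructing pair for $\{\chi_n\}$ is $(\{f_n\},S)$ with $\{f_n\}$ an ONB, $S$ densely defined closed with densely defined inverse, $f_n\in D(S)\cap D((S^{-1})^* )$, $Sf_n=\chi_n$. (Such ONBs $\{f_n\},\{g_n\}$ always exist under the quasi-basis hypothesis.) For an ONB $\{f_n\}$ and $\alpha=\{\alpha_n\}\subset\mathbb C$, $H_f^\alpha=\sum_n\alpha_n f_n\otimes\bar f_n$, i.e. $H_f^\alpha x=\sum_n\alpha_n\langle x,f_n\rangle f_n$ on $D(H_f^\alpha)=\{x:\sum_n|\alpha_n|^2|\langle x,f_n\rangle|^2<\infty\}$. For a dense subspace $\mathcal D_0$, $\mathcal L(\mathcal D_0)$ is the algebra of linear operators from $\mathcal D_0$ into $\mathcal D_0$. *)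

theory Defs
  imports "HOL-Analysis.Analysis"
begin

text \<open>A complex inner product space, presented as a real inner product space
(with real inner product = real part of the complex one) equipped with a complex
scalar multiplication and a complex inner product, linear in the FIRST argument.\<close>

class complex_inner = real_inner +
  fixes scaleC :: "complex \<Rightarrow> 'a \<Rightarrow> 'a"
    and cinner :: "'a \<Rightarrow> 'a \<Rightarrow> complex"
  assumes scaleC_add_right: "scaleC a (x + y) = scaleC a x + scaleC a y"
    and scaleC_add_left: "scaleC (a + b) x = scaleC a x + scaleC b x"
    and scaleC_scaleC: "scaleC a (scaleC b x) = scaleC (a * b) x"
    and scaleC_one: "scaleC 1 x = x"
    and scaleC_of_real: "scaleC (complex_of_real r) x = scaleR r x"
    and cinner_add_left: "cinner (x + y) z = cinner x z + cinner y z"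
    and cinner_scaleC_left: "cinner (scaleC a x) y = a * cinner x y"
    and cinner_commute: "cinner y x = cnj (cinner x y)"
    and inner_cinner: "inner x y = Re (cinner x y)"

class chilbert_space = complex_inner + complete_space

definition cspan :: "'a::complex_inner set \<Rightarrow> 'a set" where
  "cspan S = {x. \<exists>F c. finite F \<and> F \<subseteq> S \<and> x = (\<Sum>v\<in>F. scaleC (c v) v)}"

definition csubspace :: "'a::complex_inner set \<Rightarrow> bool" where
  "csubspace S \<longleftrightarrow> 0 \<in> S \<and> (\<forall>x\<in>S. \<forall>y\<in>S. x + y \<in> S) \<and> (\<forall>a. \<forall>x\<in>S. scaleC a x \<in> S)"

definition cdense :: "'a::complex_inner set \<Rightarrow> bool" where
  "cdense S \<longleftrightarrow> closure S = UNIV"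

definition ONB :: "(nat \<Rightarrow> 'a::complex_inner) \<Rightarrow> bool" where
  "ONB f \<longleftrightarrow> (\<forall>n m. cinner (f n) (f m) = (if n = m then 1 else 0))
              \<and> cdense (cspan (range f))"

definition biorthogonal :: "(nat \<Rightarrow> 'a::complex_inner) \<Rightarrow> (nat \<Rightarrow> 'a) \<Rightarrow> bool" where
  "biorthogonal \<phi> \<psi> \<longleftrightarrow> (\<forall>n m. cinner (\<phi> n) (\<psi> m) = (if n = m then 1 else 0))"

definition Dseq :: "(nat \<Rightarrow> 'a::complex_inner) \<Rightarrow> 'a set" where
  "Dseq \<phi> = {x. summable (\<lambda>n. (cmod (cinner x (\<phi> n)))\<^sup>2)}"

definition quasi_basis ::
  "(nat \<Rightarrow> 'a::complex_inner) \<Rightarrow> (nat \<Rightarrow> 'a) \<Rightarrow> 'a set \<Rightarrow> 'a set \<Rightarrow> bool" where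
  "quasi_basis \<phi> \<psi> \<D> \<E> \<longleftrightarrow>
     (\<forall>x\<in>\<D>. \<forall>y\<in>\<E>. (\<lambda>k. cinner x (\<phi> k) * cinner (\<psi> k) y) sums cinner x y)"

type_synonym 'a lop = "'a set \<times> ('a \<Rightarrow> 'a)"

definition ldom :: "'a lop \<Rightarrow> 'a set" where "ldom A = fst A"
definition lapp :: "'a lop \<Rightarrow> 'a \<Rightarrow> 'a" where "lapp A = snd A"

definition op_graph :: "'a lop \<Rightarrow> ('a \<times> 'a) set" where
  "op_graph A = {(x, lapp A x) | x. x \<in> ldom A}"

definition is_lop :: "'a::complex_inner lop \<Rightarrow> bool" where
  "is_lop A \<longleftrightarrow> csubspace (ldom A) \<and>
     (\<forall>x\<in>ldom A. \<forall>y\<in>ldom A. lapp A (x + y) = lapp A x + lapp A y) \<and>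
     (\<forall>a. \<forall>x\<in>ldom A. lapp A (scaleC a x) = scaleC a (lapp A x))"

definition op_restrict :: "'a lop \<Rightarrow> 'a set \<Rightarrow> 'a lop" where
  "op_restrict A S = (ldom A \<inter> S, lapp A)"

definition op_inv :: "'a lop \<Rightarrow> 'a lop" where
  "op_inv A = (lapp A ` ldom A, inv_into (ldom A) (lapp A))"

definition op_comp :: "'a lop \<Rightarrow> 'a lop \<Rightarrow> 'a lop" where
  "op_comp A B = ({x \<in> ldom B. lapp B x \<in> ldom A}, \<lambda>x. lapp A (lapp B x))"

definition in_adj_dom :: "'a::complex_inner lop \<Rightarrow> 'a \<Rightarrow> bool" where
  "in_adj_dom A y \<longleftrightarrow> (\<exists>z. \<forall>x\<in>ldom A. cinner (lapp A x) y = cinner x z)"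

definition self_adjoint_op :: "'a::complex_inner lop \<Rightarrow> bool" where
  "self_adjoint_op A \<longleftrightarrow> is_lop A \<and> cdense (ldom A) \<and>
     (\<forall>y. in_adj_dom A y \<longleftrightarrow> y \<in> ldom A) \<and>
     (\<forall>x\<in>ldom A. \<forall>y\<in>ldom A. cinner (lapp A x) y = cinner x (lapp A y))"

definition positive_op :: "'a::complex_inner lop \<Rightarrow> bool" where
  "positive_op A \<longleftrightarrow> (\<forall>x\<in>ldom A. Im (cinner (lapp A x) x) = 0 \<and> Re (cinner (lapp A x) x) \<ge> 0)"

definition T_op :: "(nat \<Rightarrow> 'a::chilbert_space) \<Rightarrow> (nat \<Rightarrow> 'a) \<Rightarrow> 'a lop" where
  "T_op f \<phi> = (Dseq \<phi>, \<lambda>x. \<Sum>n. scaleC (cinner x (\<phi> n)) (f n))"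

definition H_op :: "(nat \<Rightarrow> 'a::chilbert_space) \<Rightarrow> (nat \<Rightarrow> complex) \<Rightarrow> 'a lop" where
  "H_op f \<alpha> = ({x. summable (\<lambda>n. (cmod (\<alpha> n))\<^sup>2 * (cmod (cinner x (f n)))\<^sup>2)},
                \<lambda>x. \<Sum>n. scaleC (\<alpha> n * cinner x (f n)) (f n))"

definition constructing_pair ::
  "(nat \<Rightarrow> 'a::chilbert_space) \<Rightarrow> 'a lop \<Rightarrow> (nat \<Rightarrow> 'a) \<Rightarrow> bool" where
  "constructing_pair f S chi \<longleftrightarrow>
     ONB f \<and> is_lop S \<and> cdense (ldom S) \<and> closed (op_graph S) \<and>
     inj_on (lapp S) (ldom S) \<and> cdense (ldom (op_inv S)) \<and>
     (\<forall>n. f n \<in> ldom S \<and> in_adj_dom (op_inv S) (f n) \<and> lapp S (f n) = chi n)"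

definition in_L :: "'a lop \<Rightarrow> 'a set \<Rightarrow> bool" where
  "in_L A D0 \<longleftrightarrow> D0 \<subseteq> ldom A \<and> lapp A ` D0 \<subseteq> D0"

end

theory Submission
  imports Defs
begin

text \<open>The operator \<open>T\<^sub>\<phi>\<close> extends \<open>T\<^sub>f\<^sub>,\<^sub>\<phi>\<close> on \<open>\<D>\<close> and \<open>\<psi>\<^sub>m \<in> \<D>\<close>, so biorthogonality
gives \<open>T\<^sub>\<phi>\<psi>\<^sub>m = \<Sum>\<^sub>n \<langle>\<psi>\<^sub>m,\<phi>\<^sub>n\<rangle> f\<^sub>n = f\<^sub>m\<close>: the image \<open>T\<^sub>\<phi>\<D>\<close> contains the ONB \<open>{f\<^sub>n}\<close>, so its
span is dense. Since \<open>T\<^sub>\<phi>\<close> is injective, \<open>T\<^sub>\<phi>\<^sup>-\<^sup>1\<close> sends \<open>T\<^sub>\<phi>x\<close> back to \<open>x \<in> \<D>\<close>, so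
\<open>T\<^sub>\<phi>HT\<^sub>\<phi>\<^sup>-\<^sup>1\<close> acts on \<open>T\<^sub>\<phi>\<D>\<close> as \<open>T\<^sub>\<phi>x \<mapsto> T\<^sub>\<phi>(Hx)\<close>, which stays in \<open>T\<^sub>\<phi>\<D>\<close> when
\<open>H\<D> \<subseteq> \<D>\<close>.\<close>

lemma scaleC_zero_left [simp]: "scaleC 0 (x::'a::complex_inner) = 0"
  using scaleC_of_real[of 0 x] by simp

lemma cspan_superset: "S \<subseteq> cspan S"
proof
  fix x assume "x \<in> S"
  then have "finite {x} \<and> {x} \<subseteq> S \<and> x = (\<Sum>v\<in>{x}. scaleC 1 v)"
    by (simp add: scaleC_one)
  then show "x \<in> cspan S"
    unfolding cspan_def mem_Collect_eq by (intro exI)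
qed

lemma cspan_mono: "A \<subseteq> B \<Longrightarrow> cspan A \<subseteq> cspan B"
  unfolding cspan_def by blast

lemma cdense_cspan_if_ONB_subset:
  assumes "ONB f" and "range f \<subseteq> S"
  shows "cdense (cspan S)"
proof -
  have "closure (cspan (range f)) \<subseteq> closure (cspan S)"
    using assms(2) by (intro closure_mono cspan_mono)
  then show ?thesis
    using assms(1) unfolding ONB_def cdense_def by auto
qed

lemma ldom_op_comp [simp]: "ldom (op_comp A B) = {x \<in> ldom B. lapp B x \<in> ldom A}"
  unfolding op_comp_def ldom_def by simp

lemma lapp_op_comp [simp]: "lapp (op_comp A B) x = lapp A (lapp B x)"
  unfolding op_comp_def lapp_def by simp

lemma ldom_op_inv [simp]: "ldom (op_inv A) = lapp A ` ldom A"
  unfolding op_inv_def ldom_def lapp_def by simp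

lemma lapp_op_inv [simp]: "lapp (op_inv A) = inv_into (ldom A) (lapp A)"
  unfolding op_inv_def ldom_def lapp_def by simp

lemma ldom_T_op [simp]: "ldom (T_op f \<phi>) = Dseq \<phi>"
  unfolding T_op_def ldom_def by simp

lemma op_graph_subsetD:
  assumes "op_graph A \<subseteq> op_graph B" and "x \<in> ldom A"
  shows "x \<in> ldom B" and "lapp B x = lapp A x"
proof -
  have "(x, lapp A x) \<in> op_graph B"
    using assms unfolding op_graph_def by blast
  then show "x \<in> ldom B" "lapp B x = lapp A x"
    unfolding op_graph_def by auto
qed

lemma op_graph_closure_restrict_extends:
  assumes "op_graph T = closure (op_graph (op_restrict A D))"
    and "x \<in> D" and "x \<in> ldom A"
  shows "x \<in> ldom T" and "lapp T x = lapp A x"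
proof -
  have graph: "op_graph (op_restrict A D) \<subseteq> op_graph T"
    using assms(1) closure_subset by blast
  have "x \<in> ldom (op_restrict A D)" and "lapp (op_restrict A D) x = lapp A x"
    using assms(2,3) unfolding op_restrict_def ldom_def lapp_def by auto
  with op_graph_subsetD[OF graph] show "x \<in> ldom T" "lapp T x = lapp A x"
    by simp_all
qed

lemma lapp_T_op_dual:
  assumes "\<And>n. cinner h (\<phi> n) = (if n = m then 1 else 0)"
  shows "lapp (T_op f \<phi>) h = f m"
proof -
  have "(\<lambda>n. scaleC (cinner h (\<phi> n)) (f n)) = (\<lambda>n. if n = m then f n else 0)"
    using assms by (intro ext) (simp add: scaleC_one)
  then have "lapp (T_op f \<phi>) h = (\<Sum>n. if n = m then f n else 0)"
    unfolding T_op_def lapp_def by simp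
  also have "\<dots> = f m"
    using sums_unique[OF sums_single[of m f]] by simp
  finally show ?thesis .
qed

lemma in_L_conjugate:
  assumes "inj_on (lapp T) (ldom T)" and "D \<subseteq> ldom T" and "in_L H D"
  shows "in_L (op_comp T (op_comp H (op_inv T))) (lapp T ` D)"
  unfolding in_L_def image_image
proof (intro conjI image_subsetI)
  fix x assume x: "x \<in> D"
  have T_inv: "inv_into (ldom T) (lapp T) (lapp T x) = x"
    using assms(1,2) x by (blast intro: inv_into_f_f)
  have dom: "x \<in> ldom T" "x \<in> ldom H" "lapp H x \<in> D" "lapp H x \<in> ldom T"
    using assms(2,3) x unfolding in_L_def by blast+
  then show "lapp T x \<in> ldom (op_comp T (op_comp H (op_inv T)))"
    by (simp add: T_inv)
  show "lapp (op_comp T (op_comp H (op_inv T))) (lapp T x) \<in> lapp T ` D"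
    using dom(3) by (simp add: T_inv)
qed

lemma closure_T_op_conjugate_H_op:
  fixes \<phi> \<psi> f :: "nat \<Rightarrow> 'a::chilbert_space"
  assumes dual: "\<And>n m. cinner (\<psi> m) (\<phi> n) = (if n = m then 1 else 0)"
    and \<psi>_D: "range \<psi> \<subseteq> D" and D_dom: "D \<subseteq> Dseq \<phi>"
    and "ONB f"
    and T_def: "op_graph T = closure (op_graph (op_restrict (T_op f \<phi>) D))"
    and "inj_on (lapp T) (ldom T)"
  shows "\<forall>\<alpha>. (D \<subseteq> ldom (H_op f \<alpha>) \<and> lapp (H_op f \<alpha>) ` D \<subseteq> D) \<longrightarrow>
            cdense (cspan (lapp T ` D)) \<and>
            in_L (op_comp T (op_comp (H_op f \<alpha>) (op_inv T))) (lapp T ` D)"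
proof (intro allI impI conjI)
  have T_ext: "x \<in> ldom T" "lapp T x = lapp (T_op f \<phi>) x" if "x \<in> D" for x
    using op_graph_closure_restrict_extends[OF T_def that] that D_dom by auto
  have "f m = lapp T (\<psi> m)" for m
  proof -
    have "\<psi> m \<in> D"
      using \<psi>_D by blast
    then show ?thesis
      using T_ext(2) lapp_T_op_dual[of "\<psi> m" \<phi> m f] dual by simp
  qed
  then have "range f \<subseteq> lapp T ` D"
    using \<psi>_D by blast
  with \<open>ONB f\<close> show "cdense (cspan (lapp T ` D))"
    by (rule cdense_cspan_if_ONB_subset)
  fix \<alpha> assume "D \<subseteq> ldom (H_op f \<alpha>) \<and> lapp (H_op f \<alpha>) ` D \<subseteq> D"
  then have "in_L (H_op f \<alpha>) D"
    unfolding in_L_def .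
  moreover have "D \<subseteq> ldom T"
    using T_ext(1) by blast
  ultimately show "in_L (op_comp T (op_comp (H_op f \<alpha>) (op_inv T))) (lapp T ` D)"
    using in_L_conjugate[OF \<open>inj_on (lapp T) (ldom T)\<close>] by blast
qed

theorem theorem4p6:
  fixes \<phi> \<psi> f g :: "nat \<Rightarrow> 'a::chilbert_space"
    and \<D> \<E> :: "'a set"
    and T\<phi> T\<psi> :: "'a lop"
  assumes biorth: "biorthogonal \<phi> \<psi>"
    and D_sub: "csubspace \<D>" "cdense \<D>"
    and E_sub: "csubspace \<E>" "cdense \<E>"
    and qb: "quasi_basis \<phi> \<psi> \<D> \<E>"
    and D_incl: "cspan (range \<psi>) \<subseteq> \<D>" "\<D> \<subseteq> Dseq \<phi>"
    and E_incl: "cspan (range \<phi>) \<subseteq> \<E>" "\<E> \<subseteq> Dseq \<psi>"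
    and f_onb: "ONB f"
    and T\<phi>_def: "op_graph T\<phi> = closure (op_graph (op_restrict (T_op f \<phi>) \<D>))"
    and T\<phi>_pos: "positive_op T\<phi>" "self_adjoint_op T\<phi>"
    and T\<phi>_cp: "constructing_pair f T\<phi> \<phi>"
    and g_onb: "ONB g"
    and T\<psi>_def: "op_graph T\<psi> = closure (op_graph (op_restrict (T_op g \<psi>) \<E>))"
    and T\<psi>_pos: "positive_op T\<psi>" "self_adjoint_op T\<psi>"
    and T\<psi>_cp: "constructing_pair g T\<psi> \<psi>"
  shows "(\<forall>\<alpha>. (\<D> \<subseteq> ldom (H_op f \<alpha>) \<and> lapp (H_op f \<alpha>) ` \<D> \<subseteq> \<D>) \<longrightarrow>
            cdense (cspan (lapp T\<phi> ` \<D>)) \<and>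
            in_L (op_comp T\<phi> (op_comp (H_op f \<alpha>) (op_inv T\<phi>))) (lapp T\<phi> ` \<D>))
       \<and> (\<forall>\<alpha>. (\<E> \<subseteq> ldom (H_op g \<alpha>) \<and> lapp (H_op g \<alpha>) ` \<E> \<subseteq> \<E>) \<longrightarrow>
            cdense (cspan (lapp T\<psi> ` \<E>)) \<and>
            in_L (op_comp T\<psi> (op_comp (H_op g \<alpha>) (op_inv T\<psi>))) (lapp T\<psi> ` \<E>))"
proof -
  have \<phi>\<psi>: "cinner (\<phi> m) (\<psi> n) = (if n = m then 1 else 0)" for n m
    using biorth unfolding biorthogonal_def by auto
  have \<psi>\<phi>: "cinner (\<psi> m) (\<phi> n) = (if n = m then 1 else 0)" for n m
    using \<phi>\<psi>[where m = n and n = m] cinner_commute[of "\<phi> n" "\<psi> m"] by auto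
  have \<psi>_\<D>: "range \<psi> \<subseteq> \<D>" and \<phi>_\<E>: "range \<phi> \<subseteq> \<E>"
    using cspan_superset D_incl(1) E_incl(1) by blast+
  have inj_T\<phi>: "inj_on (lapp T\<phi>) (ldom T\<phi>)" and inj_T\<psi>: "inj_on (lapp T\<psi>) (ldom T\<psi>)"
    using T\<phi>_cp T\<psi>_cp unfolding constructing_pair_def by blast+
  show ?thesis
    using closure_T_op_conjugate_H_op[OF \<psi>\<phi> \<psi>_\<D> D_incl(2) f_onb T\<phi>_def inj_T\<phi>]
      closure_T_op_conjugate_H_op[OF \<phi>\<psi> \<phi>_\<E> E_incl(2) g_onb T\<psi>_def inj_T\<psi>]
    by (rule conjI)
qed

end
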